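(* Let $p\ge3$ be a prime, $n\ge2$, and $N=p^nN_1$ with either $N_1=1$ or $N_1=q_1\cdots q_r$, $q_1,\dots,q_r$ distinct primes different from $p$ with $\gcd(p,q_i-1)=1$. Let $\mathbf{s}$ be a Zadoff–Chu sequence of length $N$ and let $\pi(x)=x^p+ax+b\in\mathbb{Z}_N[x]$ be a permutation polynomial over $\mathbb{Z}_N$ with $a\not\equiv0,-1\pmod p$. Then (i) the sequences $\mathbf{s}\circ\pi$ and $\mathbf{s}\circ\pi^{-1}$ are each inequivalent to ZC sequences, i.e., neither lies in the equivalence class of any Zadoff–Chu sequence of length $N$; (ii) the sequence $\mathbf{s}\circ\pi$ lies neither in the equivalence class of any sequence $\mathbf{s}'\circ\pi'$ nor in that of any sequence $\mathbf{s}'\circ\pi'^{-1}$, where $\mathbf{s}'$ is a Zadoff–Chu sequence of length $N$ and $\pi'$ is a quadratic permutation polynomial over $\mathbb{Z}_N$.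
   Context: $\xi_N=e^{-2\pi\sqrt{-1}/N}$, $\xi_N^{x/2}=e^{-\pi\sqrt{-1}x/N}$. A Zadoff–Chu sequence of length $N$ is $s(k)=\xi_N^{u(k^2+(N\bmod2)k+2lk)/2}$, $0\le k<N$, with $\gcd(u,N)=1$ and $l$ an integer. A permutation polynomial over $\mathbb{Z}_N$ induces a bijection $k\mapsto\pi(k)\bmod N$ of $\mathbb{Z}_N$; $\pi^{-1}$ is the inverse permutation; $(\mathbf{s}\circ\sigma)(k)=s(\sigma(k))$. A quadratic permutation polynomial is a permutation polynomial $f_2x^2+f_1x+f_0$. The equivalence class of a length-$N$ sequence $\mathbf{x}$ is the set of all sequences obtained from $\mathbf{x}$ by composing: rotation $y(k)=c\,x(k)$, $|c|=1$; translation $y(k)=x(k+d\bmod N)$; decimation $y(k)=x(ak\bmod N)$ with $\gcd(a,N)=1$; linear frequency modulation $y(k)=\xi_N^{lk}x(k)$, $l$ an integer; conjugation $y(k)=x^*(k)$. *)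

theory Defs
  imports Complex_Main "HOL-Computational_Algebra.Primes"
begin

text \<open>Sequences of length N are functions int => complex, only the values
 at indices 0..N-1 matter.\<close>

text \<open>xi_N^(x/2) = exp(-pi i x / N)\<close>
definition xi_half :: "int \<Rightarrow> int \<Rightarrow> complex" where
  "xi_half N x = cis (- pi * real_of_int x / real_of_int N)"

definition zc_seq :: "int \<Rightarrow> int \<Rightarrow> int \<Rightarrow> int \<Rightarrow> complex" where
  "zc_seq N u l k = xi_half N (u * (k^2 + (N mod 2) * k + 2 * l * k))"

definition is_ZC :: "int \<Rightarrow> (int \<Rightarrow> complex) \<Rightarrow> bool" where
  "is_ZC N s \<longleftrightarrow> (\<exists>u l. coprime u N \<and> (\<forall>k\<in>{0..<N}. s k = zc_seq N u l k))"

definition perm_poly :: "int \<Rightarrow> (int \<Rightarrow> int) \<Rightarrow> bool" where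
  "perm_poly N f \<longleftrightarrow> bij_betw (\<lambda>k. f k mod N) {0..<N} {0..<N}"

definition quad_perm_poly :: "int \<Rightarrow> int \<Rightarrow> int \<Rightarrow> int \<Rightarrow> bool" where
  "quad_perm_poly N f2 f1 f0 \<longleftrightarrow> f2 mod N \<noteq> 0 \<and>
     perm_poly N (\<lambda>x. f2 * x^2 + f1 * x + f0)"

definition comp_perm :: "int \<Rightarrow> (int \<Rightarrow> complex) \<Rightarrow> (int \<Rightarrow> int) \<Rightarrow> int \<Rightarrow> complex" where
  "comp_perm N s f k = s (f k mod N)"

definition comp_inv_perm :: "int \<Rightarrow> (int \<Rightarrow> complex) \<Rightarrow> (int \<Rightarrow> int) \<Rightarrow> int \<Rightarrow> complex" where
  "comp_inv_perm N s f k = s (the_inv_into {0..<N} (\<lambda>x. f x mod N) k)"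

inductive equiv_seq :: "int \<Rightarrow> (int \<Rightarrow> complex) \<Rightarrow> (int \<Rightarrow> complex) \<Rightarrow> bool" for N where
  base: "(\<forall>k\<in>{0..<N}. y k = x k) \<Longrightarrow> equiv_seq N x y"
| rot: "equiv_seq N x y \<Longrightarrow> norm c = 1 \<Longrightarrow> (\<forall>k\<in>{0..<N}. z k = c * y k) \<Longrightarrow> equiv_seq N x z"
| transl: "equiv_seq N x y \<Longrightarrow> (\<forall>k\<in>{0..<N}. z k = y ((k + d) mod N)) \<Longrightarrow> equiv_seq N x z"
| decim: "equiv_seq N x y \<Longrightarrow> coprime a N \<Longrightarrow> (\<forall>k\<in>{0..<N}. z k = y ((a * k) mod N)) \<Longrightarrow> equiv_seq N x z"
| lfm: "equiv_seq N x y \<Longrightarrow> (\<forall>k\<in>{0..<N}. z k = xi_half N (2 * l * k) * y k) \<Longrightarrow> equiv_seq N x z"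
| conj: "equiv_seq N x y \<Longrightarrow> (\<forall>k\<in>{0..<N}. z k = cnj (y k)) \<Longrightarrow> equiv_seq N x z"

end

(*
  Write a sequence as c * xi_half N (G k) with an integer phase G, and call G quadratic if,
  modulo p^2, G k = A k^2 + B k + R k with p not dividing A and R p-flat: constant modulo p,
  and modulo p^2 a function of k mod p.  The phase of a Zadoff-Chu sequence is quadratic, and
  so is that of its composition with a quadratic permutation polynomial f2 x^2 + f1 x + f0 or
  with the inverse permutation, because p divides f2 but not f1.  Rotation, translation,
  decimation, linear frequency modulation and conjugation preserve quadratic phases.

  For pi x = x^p + a x + b one has (k + p)^p = k^p (mod p^2).  If U (pi k)^2 + V (pi k) were
  quadratic with p not dividing U, comparing its values at k and k + p for k = 0, 1 would give
  A = a U (1 + a) (mod p), and its second difference at 0 would give A = U (1 + a)^2 (mod p);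
  so p would divide U (1 + a), contradicting a /= -1 (mod p).  This excludes a quadratic phase
  for s o pi, with U the quadratic coefficient of the Zadoff-Chu sequence s, and for s o pi^-1,
  since a quadratic phase A x^2 + B x + R x of s o pi^-1 would make A (pi k)^2 + B (pi k)
  quadratic in k.
*)

theory Submission
  imports Defs "HOL-Number_Theory.Cong"
begin

lemma xi_half_add: "xi_half N x * xi_half N y = xi_half N (x + y)"
  unfolding xi_half_def cis_mult by (simp add: diff_divide_distrib add_divide_distrib algebra_simps)

lemma cnj_xi_half: "cnj (xi_half N x) = xi_half N (- x)"
  unfolding xi_half_def cis_cnj by simp

lemma xi_half_eq_1_iff:
  assumes "N > 0" shows "xi_half N x = 1 \<longleftrightarrow> 2 * N dvd x"
proof -
  have "xi_half N x = 1 \<longleftrightarrow> cos (- pi * x / N) = 1"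
    unfolding xi_half_def
    by (metis cis.sel(1) cis_multiple_2pi cos_one_2pi_int mult.commute mult.left_commute
        Ints_of_int one_complex.sel(1))
  also have "\<dots> \<longleftrightarrow> (\<exists>m::int. - pi * x / N = m * 2 * pi)"
    by (rule cos_one_2pi_int)
  also have "\<dots> \<longleftrightarrow> (\<exists>m::int. x = 2 * N * (- m))"
  proof -
    have "- pi * x / N = m * 2 * pi \<longleftrightarrow> pi * x = pi * of_int (2 * N * (- m))" for m :: int
      using assms by (auto simp: field_simps)
    then have "- pi * x / N = m * 2 * pi \<longleftrightarrow> x = 2 * N * (- m)" for m :: int
      by (simp only: mult_cancel_left pi_neq_zero of_int_eq_iff simp_thms)
    then show ?thesis by simp
  qed
  also have "\<dots> \<longleftrightarrow> 2 * N dvd x"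
    by (metis dvd_def minus_minus)
  finally show ?thesis .
qed

lemma xi_half_eq_iff:
  assumes "N > 0" shows "xi_half N x = xi_half N y \<longleftrightarrow> [x = y] (mod 2 * N)"
proof -
  have "xi_half N x = xi_half N y * xi_half N (x - y)"
    by (simp add: xi_half_add)
  moreover have "xi_half N y \<noteq> 0"
    unfolding xi_half_def by (metis cis_neq_zero)
  ultimately have "xi_half N x = xi_half N y \<longleftrightarrow> xi_half N (x - y) = 1"
    by (metis mult_cancel_left1)
  then show ?thesis
    using xi_half_eq_1_iff[OF assms] by (simp add: cong_iff_dvd_diff dvd_diff_commute)
qed

section \<open>Congruences modulo p^2\<close>

lemma not_dvd_of_coprime:
  fixes u N p :: int
  assumes "coprime u N" "p dvd N" "prime p"
  shows "\<not> p dvd u"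
  using assms by (meson coprime_common_divisor not_prime_unit)

lemma dvd_1_plus_iff_mod:
  fixes p a :: int
  assumes "p > 1"
  shows "p dvd 1 + a \<longleftrightarrow> a mod p = p - 1"
proof -
  have "p dvd 1 + a \<longleftrightarrow> a mod p = -1 mod p"
    by (simp add: mod_eq_dvd_iff add.commute)
  also have "-1 mod p = p - 1"
    using assms by (simp add: zmod_minus1)
  finally show ?thesis .
qed

lemma cong_mult_modulus_sq:
  fixes p x y :: int
  assumes "[x = y] (mod p)" shows "[p * x = p * y] (mod p^2)"
  using cong_cmult_leftI[OF assms, of p] by (simp add: power2_eq_square)

lemma cong_power_prime_lift:
  fixes p :: nat and x y :: int
  assumes "[x = y] (mod int p)"
  shows "[x^p = y^p] (mod (int p)^2)"
proof -
  have "[(\<Sum>i<p. y^(p - Suc i) * x^i) = (\<Sum>i<p. y^(p - Suc i) * y^i)] (mod int p)"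
    using assms by (intro cong_sum cong_scalar_left cong_pow)
  also have "(\<Sum>i<p. y^(p - Suc i) * y^i) = int p * y^(p - 1)"
    by (simp add: power_add[symmetric])
  finally have "int p dvd (\<Sum>i<p. y^(p - Suc i) * x^i)"
    by (metis cong_dvd_iff dvd_triv_left)
  moreover have "int p dvd x - y"
    using assms by (simp add: cong_iff_dvd_diff)
  ultimately have "int p * int p dvd (x - y) * (\<Sum>i<p. y^(p - Suc i) * x^i)"
    by (metis mult_dvd_mono)
  then show ?thesis
    by (simp only: cong_iff_dvd_diff power_diff_sumr2 power2_eq_square)
qed

lemma quadratic_taylor_mod_sq:
  fixes p x x' t U V :: int
  assumes "[x' = x + p * t] (mod p^2)"
  shows "[U * x'^2 + V * x' = U * x^2 + V * x + p * t * (2 * U * x + V)] (mod p^2)"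
proof -
  have "[U * x'^2 + V * x' = U * (x + p * t)^2 + V * (x + p * t)] (mod p^2)"
    using assms by (intro cong_add cong_scalar_left cong_pow)
  also have "U * (x + p * t)^2 + V * (x + p * t) = U * x^2 + V * x + p * t * (2 * U * x + V) + p^2 * (U * t^2)"
    by (simp add: power2_eq_square algebra_simps)
  also have "[\<dots> = U * x^2 + V * x + p * t * (2 * U * x + V)] (mod p^2)"
    by (simp add: cong_iff_dvd_diff)
  finally show ?thesis .
qed

lemma unit_inverse_mod_sq:
  fixes p f :: int
  assumes "prime p" "\<not> p dvd f"
  obtains f' where "[f * f' = 1] (mod p^2)" "\<not> p dvd f'"
proof -
  have "coprime f (p^2)"
    using prime_imp_coprime[OF assms] by (simp add: coprime_commute)
  then obtain f' where f': "[f * f' = 1] (mod p^2)"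
    using cong_solve_coprime_int by blast
  moreover have "\<not> p dvd f'"
  proof
    assume "p dvd f'"
    have "[f * f' = 1] (mod p)"
      using f' by (rule cong_dvd_modulus) (simp add: power2_eq_square)
    moreover have "p dvd f * f'"
      using \<open>p dvd f'\<close> by simp
    ultimately have "p dvd 1"
      using cong_dvd_iff by blast
    then show False
      using assms(1) not_prime_unit by blast
  qed
  ultimately show thesis
    using that by blast
qed

(* One Newton step: x = fi (k - f0) - p fi g x^2 (mod p^2), where x^2 only matters modulo p. *)
lemma quadratic_inverse_mod_sq:
  fixes p g f1 f0 fi x k :: int
  assumes "[f1 * fi = 1] (mod p^2)" "[p * g * x^2 + f1 * x + f0 = k] (mod p^2)"
  shows "[x = fi * (k - f0) + p * (- fi * g * (fi * (k - f0))^2)] (mod p^2)"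
proof -
  define y0 where "y0 = fi * (k - f0)"
  have "[x = x * (f1 * fi)] (mod p^2)"
    using cong_scalar_left[OF cong_sym[OF assms(1)], of x] by simp
  also have "[x * (f1 * fi) = y0 - fi * g * (p * x^2)] (mod p^2)"
  proof -
    have "x * (f1 * fi) - (y0 - fi * g * (p * x^2)) = fi * (p * g * x^2 + f1 * x + f0 - k)"
      unfolding y0_def by (simp add: algebra_simps)
    then show ?thesis
      using assms(2) by (simp add: cong_iff_dvd_diff)
  qed
  finally have x: "[x = y0 - fi * g * (p * x^2)] (mod p^2)" .
  then have "[x = y0] (mod p)"
    by (rule cong_dvd_modulus[THEN cong_trans]) (simp_all add: power2_eq_square cong_iff_dvd_diff)
  then have "[p * x^2 = p * y0^2] (mod p^2)"
    by (intro cong_mult_modulus_sq cong_pow)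
  then have "[y0 - fi * g * (p * x^2) = y0 - fi * g * (p * y0^2)] (mod p^2)"
    by (rule cong_diff[OF cong_refl cong_scalar_left])
  with x show ?thesis
    unfolding y0_def by (rule cong_trans[THEN cong_trans]) (simp add: algebra_simps)
qed

section \<open>Quadratic phases\<close>

definition respects_cong :: "int \<Rightarrow> int \<Rightarrow> (int \<Rightarrow> int) \<Rightarrow> bool" where
  "respects_cong m m' f \<longleftrightarrow> (\<forall>x y. [x = y] (mod m) \<longrightarrow> [f x = f y] (mod m'))"

lemma respects_cong_comp:
  assumes "respects_cong m' m'' g" "respects_cong m m' f"
  shows "respects_cong m m'' (\<lambda>x. g (f x))"
  using assms unfolding respects_cong_def by blast

lemma respects_cong_affine: "respects_cong m m (\<lambda>k. a * k + d)"
  unfolding respects_cong_def by (blast intro: cong_add cong_scalar_left cong_refl)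

lemma respects_cong_power_affine: "respects_cong m m (\<lambda>x. x^n + a * x + b)"
  unfolding respects_cong_def by (auto intro!: cong_add cong_mult cong_pow)

definition p_flat :: "int \<Rightarrow> (int \<Rightarrow> int) \<Rightarrow> bool" where
  "p_flat p R \<longleftrightarrow> respects_cong p (p^2) R \<and> (\<forall>x. [R x = R 0] (mod p))"

lemma p_flat_transform:
  assumes "p_flat p R" "respects_cong p p f"
  shows "p_flat p (\<lambda>k. c * R (f k) + K)"
proof -
  have "[R (f x) = R (f y)] (mod p^2)" if "[x = y] (mod p)" for x y
    using assms that unfolding p_flat_def respects_cong_def by blast
  moreover have "[R (f x) = R (f 0)] (mod p)" for x
    using assms unfolding p_flat_def by (metis cong_sym cong_trans)
  ultimately show ?thesis
    unfolding p_flat_def respects_cong_def by (simp add: cong_add cong_scalar_left)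
qed

lemma p_flat_cong:
  assumes "p_flat p R" "\<forall>k. [S k = R k] (mod p^2)"
  shows "p_flat p S"
proof -
  have R: "respects_cong p (p^2) R" "[R x = R 0] (mod p)" for x
    using assms(1) unfolding p_flat_def by auto
  have S_sq: "[S k = R k] (mod p^2)" for k
    using assms(2) by blast
  then have S_p: "[S k = R k] (mod p)" for k
    by (rule cong_dvd_modulus) (simp add: power2_eq_square)
  have "[S x = S y] (mod p^2)" if "[x = y] (mod p)" for x y
  proof -
    have "[R x = R y] (mod p^2)"
      using R(1) that unfolding respects_cong_def by blast
    then show ?thesis
      using S_sq cong_sym cong_trans by metis
  qed
  moreover have "[S x = S 0] (mod p)" for x
    using S_p R(2) cong_sym cong_trans by metis
  ultimately show ?thesis unfolding p_flat_def respects_cong_def by blast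
qed

lemma p_flat_const_plus_multiple:
  assumes "respects_cong p p h"
  shows "p_flat p (\<lambda>k. C + p * h k)"
proof -
  have "[C + p * h x = C + p * h y] (mod p^2)" if "[x = y] (mod p)" for x y
    using assms that unfolding respects_cong_def
    by (intro cong_add cong_refl cong_mult_modulus_sq) blast
  moreover have "[C + p * h x = C + p * h 0] (mod p)" for x
    by (simp add: cong_iff_dvd_diff)
  ultimately show ?thesis unfolding p_flat_def respects_cong_def by blast
qed

definition quadratic_phase :: "int \<Rightarrow> (int \<Rightarrow> int) \<Rightarrow> bool" where
  "quadratic_phase p G \<longleftrightarrow>
     (\<exists>A B R. \<not> p dvd A \<and> p_flat p R \<and> (\<forall>k. G k = A * k^2 + B * k + R k))"

lemma quadratic_phase_transform:
  assumes "quadratic_phase p G" "prime p" "\<not> p dvd c" "\<not> p dvd a"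
  shows "quadratic_phase p (\<lambda>k. c * G (a * k + d) + L * k)"
proof -
  obtain A B R where A: "\<not> p dvd A" and R: "p_flat p R" and G: "\<forall>k. G k = A * k^2 + B * k + R k"
    using assms(1) unfolding quadratic_phase_def by blast
  have "p_flat p (\<lambda>k. c * R (a * k + d) + c * (A * d^2 + B * d))"
    by (rule p_flat_transform[OF R respects_cong_affine])
  moreover have "\<not> p dvd c * A * a^2"
    using assms(2-4) A by (simp add: prime_dvd_mult_iff prime_dvd_power_iff)
  moreover have "c * G (a * k + d) + L * k = (c * A * a^2) * k^2 + (c * (2 * A * a * d + B * a) + L) * k
      + (c * R (a * k + d) + c * (A * d^2 + B * d))" for k
    using G by (simp add: power2_eq_square algebra_simps)
  ultimately show ?thesis unfolding quadratic_phase_def by blast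
qed

lemma quadratic_phase_cong:
  assumes "quadratic_phase p G" "\<forall>k. [G' k = G k] (mod p^2)"
  shows "quadratic_phase p G'"
proof -
  obtain A B R where A: "\<not> p dvd A" and R: "p_flat p R" and G: "\<forall>k. G k = A * k^2 + B * k + R k"
    using assms(1) unfolding quadratic_phase_def by blast
  define R' where "R' k = G' k - A * k^2 - B * k" for k
  have "R' k - R k = G' k - G k" for k
    using G unfolding R'_def by simp
  then have "[R' k = R k] (mod p^2)" for k
    using assms(2) by (simp add: cong_iff_dvd_diff)
  then have "p_flat p R'" using R p_flat_cong by blast
  then show ?thesis unfolding quadratic_phase_def R'_def using A by force
qed

lemma quadratic_phase_affine_square:
  assumes "prime p" "\<not> p dvd U" "\<not> p dvd \<alpha>" "respects_cong p p h"
  shows "quadratic_phase p (\<lambda>k. U * (\<alpha> * k + \<beta>)^2 + V * (\<alpha> * k + \<beta>) + p * h k)"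
proof -
  have "p_flat p (\<lambda>k. (U * \<beta>^2 + V * \<beta>) + p * h k)"
    using assms(4) by (rule p_flat_const_plus_multiple)
  moreover have "\<not> p dvd U * \<alpha>^2"
    using assms(1-3) by (simp add: prime_dvd_mult_iff prime_dvd_power_iff)
  moreover have "U * (\<alpha> * k + \<beta>)^2 + V * (\<alpha> * k + \<beta>) + p * h k
      = (U * \<alpha>^2) * k^2 + (2 * U * \<alpha> * \<beta> + V * \<alpha>) * k + ((U * \<beta>^2 + V * \<beta>) + p * h k)" for k
    by (simp add: power2_eq_square algebra_simps)
  ultimately show ?thesis unfolding quadratic_phase_def by blast
qed

lemma p_flat_quadratic_derivative_dvd:
  fixes q :: int
  assumes "p_flat q F" "\<And>k. F k = U * (\<pi> k)^2 + V * \<pi> k - (A * k^2 + B * k)" "q \<noteq> 0"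
    and "[\<pi> (k + q) = \<pi> k + q * a] (mod q^2)"
  shows "q dvd a * (2 * U * \<pi> k + V) - (2 * A * k + B)"
proof -
  define D where "D = a * (2 * U * \<pi> k + V) - (2 * A * k + B)"
  have "[U * (\<pi> (k + q))^2 + V * \<pi> (k + q)
      = U * (\<pi> k)^2 + V * \<pi> k + q * a * (2 * U * \<pi> k + V)] (mod q^2)"
    using assms(4) by (rule quadratic_taylor_mod_sq)
  moreover have "[A * (k + q)^2 + B * (k + q) = A * k^2 + B * k + q * 1 * (2 * A * k + B)] (mod q^2)"
    by (rule quadratic_taylor_mod_sq) simp
  ultimately have "[F (k + q) = F k + q * D] (mod q^2)"
    unfolding assms(2) D_def by (simp add: cong_diff algebra_simps)
  moreover have "[F (k + q) = F k] (mod q^2)"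
    using assms(1) unfolding p_flat_def respects_cong_def by (simp add: cong_iff_dvd_diff)
  ultimately have "[F k + q * D = F k] (mod q^2)"
    using cong_sym cong_trans by blast
  then have "q * q dvd q * D"
    by (simp add: cong_add_lcancel_0 cong_0_iff power2_eq_square)
  then show ?thesis
    using assms(3) unfolding D_def by simp
qed

lemma power_affine_shift_mod_sq:
  fixes p :: nat and a b k :: int
  shows "[(k + int p)^p + a * (k + int p) + b = (k^p + a * k + b) + int p * a] (mod (int p)^2)"
proof -
  have "[(k + int p)^p = k^p] (mod (int p)^2)"
    using cong_power_prime_lift[of "k + int p" k p] by (simp add: cong_iff_dvd_diff)
  then show ?thesis
    by (simp add: cong_iff_dvd_diff algebra_simps)
qed

lemma power_affine_phase_not_quadratic:
  fixes p :: nat and a b U V A B :: int and R :: "int \<Rightarrow> int"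
  assumes "prime p" "p > 2" "\<not> int p dvd U" "\<not> int p dvd 1 + a" "p_flat (int p) R"
  shows "\<not> (\<forall>k. [U * (k^p + a * k + b)^2 + V * (k^p + a * k + b) = A * k^2 + B * k + R k]
               (mod (int p)^2))"
proof
  define q where "q = int p"
  define \<pi> where "\<pi> k = k^p + a * k + b" for k
  define F where "F k = U * (\<pi> k)^2 + V * \<pi> k - (A * k^2 + B * k)" for k
  have \<pi>: "\<pi> 0 = b" "\<pi> 1 = b + (1 + a)" "\<pi> (-1) = b - (1 + a)"
    using assms(2) prime_odd_nat[OF assms(1,2)] unfolding \<pi>_def by simp_all
  assume "\<forall>k. [U * (k^p + a * k + b)^2 + V * (k^p + a * k + b) = A * k^2 + B * k + R k]
               (mod (int p)^2)"
  then have "\<forall>k. [F k = R k] (mod q^2)"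
    unfolding F_def \<pi>_def q_def by (simp add: cong_iff_dvd_diff algebra_simps)
  then have F: "p_flat q F"
    using assms(5) p_flat_cong unfolding q_def by blast
  \<comment> \<open>F (k + p) = F k (mod p^2) makes the derivative of F vanish modulo p \<dots>\<close>
  have "q dvd a * (2 * U * \<pi> k + V) - (2 * A * k + B)" for k
    using p_flat_quadratic_derivative_dvd[OF F F_def] power_affine_shift_mod_sq assms(1)
    unfolding q_def \<pi>_def by (simp add: prime_gt_0_nat)
  from dvd_diff[OF this[of 1] this[of 0]] have "q dvd 2 * a * U * (1 + a) - 2 * A"
    unfolding \<pi> by (simp add: algebra_simps)
  \<comment> \<open>\<dots> and F 1 = F 0 = F (-1) (mod p) its second difference\<close>
  moreover have "q dvd 2 * U * (1 + a)^2 - 2 * A"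
  proof -
    have "[F 1 + F (-1) = F 0 + F 0] (mod q)"
      using F unfolding p_flat_def by (blast intro: cong_add)
    moreover have "F 1 + F (-1) - (F 0 + F 0) = 2 * U * (1 + a)^2 - 2 * A"
      unfolding F_def \<pi> by (simp add: power2_eq_square algebra_simps)
    ultimately show ?thesis
      by (simp add: cong_iff_dvd_diff)
  qed
  ultimately have "q dvd (2 * U * (1 + a)^2 - 2 * A) - (2 * a * U * (1 + a) - 2 * A)"
    by (metis dvd_diff)
  then have "q dvd 2 * U * (1 + a)"
    by (simp add: power2_eq_square algebra_simps)
  moreover have "\<not> q dvd 2"
    using assms(2) unfolding q_def by (auto dest: zdvd_imp_le)
  ultimately show False
    using assms(1,3,4) unfolding q_def by (simp add: prime_dvd_mult_iff)
qed

section \<open>Sequences with a quadratic phase\<close>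

lemma xi_half_respects_cong:
  assumes "N > 0" "respects_cong N (2 * N) G" "[x = y] (mod N)"
  shows "xi_half N (G x) = xi_half N (G y)"
  using assms unfolding respects_cong_def by (simp add: xi_half_eq_iff)

lemma xi_half_phase_difference:
  assumes "N > 0" "respects_cong N (2 * N) F" "respects_cong N (2 * N) G"
    and "\<forall>k\<in>{0..<N}. xi_half N (F k) = c * xi_half N (G k)" "m dvd 2 * N"
  shows "[F k - G k = F 0 - G 0] (mod m)"
proof -
  have "xi_half N (F k) = xi_half N (F (k mod N))" "xi_half N (G k) = xi_half N (G (k mod N))"
    using assms(1-3) by (simp_all add: xi_half_respects_cong)
  then have "xi_half N (F k) = c * xi_half N (G k)" "xi_half N (F 0) = c * xi_half N (G 0)"
    using assms(1,4) by simp_all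
  then have "xi_half N (F k) * xi_half N (G 0) = xi_half N (F 0) * xi_half N (G k)"
    by simp
  then have "[F k + G 0 = F 0 + G k] (mod 2 * N)"
    using assms(1) by (simp add: xi_half_add xi_half_eq_iff)
  then have "[F k - G k = F 0 - G 0] (mod 2 * N)"
    by (simp add: cong_iff_dvd_diff algebra_simps)
  then show ?thesis
    using assms(5) by (rule cong_dvd_modulus)
qed

definition has_quadratic_phase :: "int \<Rightarrow> int \<Rightarrow> (int \<Rightarrow> complex) \<Rightarrow> bool" where
  "has_quadratic_phase N p y \<longleftrightarrow> (\<exists>c G. quadratic_phase p G \<and> respects_cong N (2 * N) G
     \<and> (\<forall>k\<in>{0..<N}. y k = c * xi_half N (G k)))"

lemma has_quadratic_phase_cong:
  assumes "has_quadratic_phase N p y" "\<forall>k\<in>{0..<N}. z k = y k"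
  shows "has_quadratic_phase N p z"
  using assms unfolding has_quadratic_phase_def by simp

lemma has_quadratic_phase_mult_const:
  assumes "has_quadratic_phase N p y"
  shows "has_quadratic_phase N p (\<lambda>k. c * y k)"
proof -
  obtain c' G where "quadratic_phase p G" "respects_cong N (2 * N) G"
      "\<And>k. k \<in> {0..<N} \<Longrightarrow> y k = c' * xi_half N (G k)"
    using assms unfolding has_quadratic_phase_def by blast
  then show ?thesis
    unfolding has_quadratic_phase_def by (intro exI[of _ "c * c'"] exI[of _ G]) simp
qed

lemma has_quadratic_phase_cnj:
  assumes "has_quadratic_phase N p y" "prime p"
  shows "has_quadratic_phase N p (\<lambda>k. cnj (y k))"
proof -
  obtain c G where G: "quadratic_phase p G" "respects_cong N (2 * N) G"
      "\<And>k. k \<in> {0..<N} \<Longrightarrow> y k = c * xi_half N (G k)"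
    using assms(1) unfolding has_quadratic_phase_def by blast
  have nonunit: "\<not> p dvd 1"
    using assms(2) by (rule prime_elem_not_unit[OF prime_imp_prime_elem])
  have "quadratic_phase p (\<lambda>k. - G k)"
    using quadratic_phase_transform[OF G(1) assms(2) _ nonunit, of "-1" 0 0] nonunit by simp
  moreover have "respects_cong N (2 * N) (\<lambda>k. - G k)"
    using G(2) unfolding respects_cong_def by (simp add: cong_minus_minus_iff)
  moreover have "cnj (y k) = cnj c * xi_half N (- G k)" if "k \<in> {0..<N}" for k
    using G(3)[OF that] by (simp add: cnj_xi_half)
  ultimately show ?thesis
    unfolding has_quadratic_phase_def by blast
qed

lemma has_quadratic_phase_modulate:
  assumes "has_quadratic_phase N p y" "prime p"
  shows "has_quadratic_phase N p (\<lambda>k. xi_half N (2 * l * k) * y k)"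
proof -
  obtain c G where G: "quadratic_phase p G" "respects_cong N (2 * N) G"
      "\<And>k. k \<in> {0..<N} \<Longrightarrow> y k = c * xi_half N (G k)"
    using assms(1) unfolding has_quadratic_phase_def by blast
  have nonunit: "\<not> p dvd 1"
    using assms(2) by (rule prime_elem_not_unit[OF prime_imp_prime_elem])
  have "quadratic_phase p (\<lambda>k. G k + 2 * l * k)"
    using quadratic_phase_transform[OF G(1) assms(2) nonunit nonunit, of 0 "2 * l"] by simp
  moreover have "respects_cong N (2 * N) (\<lambda>k. G k + 2 * l * k)"
  proof -
    have "[2 * l * x = 2 * l * y] (mod 2 * N)" if "[x = y] (mod N)" for x y
      using cong_scalar_left[OF cong_cmult_leftI[OF that, of 2], of l] by (simp add: ac_simps)
    then show ?thesis
      using G(2) unfolding respects_cong_def by (blast intro: cong_add)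
  qed
  moreover have "xi_half N (2 * l * k) * y k = c * xi_half N (G k + 2 * l * k)"
    if "k \<in> {0..<N}" for k
    using G(3)[OF that] by (simp add: xi_half_add[symmetric] algebra_simps)
  ultimately show ?thesis
    unfolding has_quadratic_phase_def by blast
qed

lemma has_quadratic_phase_affine_reindex:
  assumes "has_quadratic_phase N p y" "N > 0" "prime p" "\<not> p dvd a"
  shows "has_quadratic_phase N p (\<lambda>k. y ((a * k + d) mod N))"
proof -
  obtain c G where G: "quadratic_phase p G" "respects_cong N (2 * N) G"
      "\<And>k. k \<in> {0..<N} \<Longrightarrow> y k = c * xi_half N (G k)"
    using assms(1) unfolding has_quadratic_phase_def by blast
  have "\<not> p dvd 1"
    using assms(3) by (rule prime_elem_not_unit[OF prime_imp_prime_elem])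
  then have "quadratic_phase p (\<lambda>k. G (a * k + d))"
    using quadratic_phase_transform[OF G(1) assms(3) _ assms(4), of 1 d 0] by simp
  moreover have "respects_cong N (2 * N) (\<lambda>k. G (a * k + d))"
    by (rule respects_cong_comp[OF G(2) respects_cong_affine])
  moreover have "y ((a * k + d) mod N) = c * xi_half N (G (a * k + d))" for k
    using G(3)[of "(a * k + d) mod N"] assms(2)
      xi_half_respects_cong[OF assms(2) G(2), of "(a * k + d) mod N" "a * k + d"]
    by simp
  ultimately show ?thesis
    unfolding has_quadratic_phase_def by blast
qed

lemma has_quadratic_phase_equiv_seq:
  assumes "equiv_seq N x y" "has_quadratic_phase N p x" "N > 0" "prime p" "p dvd N"
  shows "has_quadratic_phase N p y"
  using assms(1,2)
proof (induction rule: equiv_seq.induct)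
  case (base y x)
  then show ?case
    by (rule has_quadratic_phase_cong[rotated])
next
  case (rot x y c z)
  then show ?case
    by (blast intro: has_quadratic_phase_cong has_quadratic_phase_mult_const)
next
  case (transl x y z d)
  then show ?case
    using has_quadratic_phase_affine_reindex[OF _ assms(3,4), of y 1 d]
      prime_elem_not_unit[OF prime_imp_prime_elem[OF assms(4)]]
    by (auto intro: has_quadratic_phase_cong)
next
  case (decim x y a z)
  moreover have "\<not> p dvd a"
    using decim.hyps(2) assms(4,5) by (meson coprime_common_divisor not_prime_unit)
  ultimately show ?case
    using has_quadratic_phase_affine_reindex[OF _ assms(3,4), of y a 0]
    by (auto intro: has_quadratic_phase_cong)
next
  case (lfm x y z l)
  then show ?case
    using has_quadratic_phase_modulate[OF _ assms(4)] by (blast intro: has_quadratic_phase_cong)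
next
  case (conj x y z)
  then show ?case
    using has_quadratic_phase_cnj[OF _ assms(4)] by (blast intro: has_quadratic_phase_cong)
qed

section \<open>Permutation polynomials\<close>

lemma perm_poly_cong_inj:
  assumes "perm_poly N f" "N > 0" "p > 0" "p dvd N" "respects_cong p p f" "[f x = f y] (mod p)"
  shows "[x = y] (mod p)"
proof -
  define g where "g r = f r mod p" for r
  have g_mod: "g (k mod p) = f k mod p" for k
  proof -
    have "[k mod p = k] (mod p)"
      by simp
    then have "[f (k mod p) = f k] (mod p)"
      using assms(5) unfolding respects_cong_def by blast
    then show ?thesis
      unfolding g_def cong_def .
  qed
  have "{0..<p} \<subseteq> g ` {0..<p}"
  proof
    fix r assume r: "r \<in> {0..<p}"
    then have "r \<in> (\<lambda>k. f k mod N) ` {0..<N}"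
      using assms(1) zdvd_imp_le[OF assms(4,2)] unfolding perm_poly_def bij_betw_def by simp
    then obtain k where k: "f k mod N = r"
      by blast
    have "g (k mod p) = (f k mod N) mod p"
      unfolding g_mod using assms(4) by (simp add: mod_mod_cancel)
    also have "\<dots> = r"
      using k r by simp
    moreover have "k mod p \<in> {0..<p}"
      using assms(3) by simp
    ultimately show "r \<in> g ` {0..<p}"
      by (metis image_eqI)
  qed
  then have "inj_on g {0..<p}"
    by (rule finite_surj_inj[rotated]) simp
  moreover have "g (x mod p) = g (y mod p)"
    using assms(6) g_mod unfolding cong_def by simp
  ultimately show ?thesis
    using assms(3) unfolding cong_def by (simp add: inj_on_eq_iff)
qed

lemma quadratic_perm_poly_no_root:
  assumes "perm_poly N (\<lambda>x. f2 * x^2 + f1 * x + f0)" "N > 0" "p > 2" "p dvd N"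
  shows "\<not> p dvd f2 * t + f1"
proof
  assume root: "p dvd f2 * t + f1"
  have not_dvd_2: "\<not> p dvd 2"
    using assms(3) by (auto dest: zdvd_imp_le)
  obtain x where x: "\<not> p dvd 2 * x - t"
  proof (cases "p dvd t")
    case True
    show ?thesis
    proof (rule that[of 1], rule notI)
      assume "p dvd 2 * 1 - t"
      with True have "p dvd t + (2 * 1 - t)"
        by (rule dvd_add)
      with not_dvd_2 show False
        by simp
    qed
  next
    case False
    then show ?thesis
      by (intro that[of 0]) simp
  qed
  have "(f2 * x^2 + f1 * x + f0) - (f2 * (t - x)^2 + f1 * (t - x) + f0) = (2 * x - t) * (f2 * t + f1)"
    by (simp add: power2_eq_square algebra_simps)
  then have "[f2 * x^2 + f1 * x + f0 = f2 * (t - x)^2 + f1 * (t - x) + f0] (mod p)"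
    unfolding cong_iff_dvd_diff using root by (metis dvd_mult)
  moreover have "respects_cong p p (\<lambda>x. f2 * x^2 + f1 * x + f0)"
    unfolding respects_cong_def by (auto intro!: cong_add cong_mult cong_pow)
  moreover have "p > 0"
    using assms(3) by simp
  ultimately have "[x = t - x] (mod p)"
    using perm_poly_cong_inj[OF assms(1,2) _ assms(4)] by blast
  with x show False
    by (simp add: cong_iff_dvd_diff algebra_simps)
qed

lemma quadratic_perm_poly_coeffs:
  assumes "perm_poly N (\<lambda>x. f2 * x^2 + f1 * x + f0)" "N > 0" "prime p" "p > 2" "p dvd N"
  shows "p dvd f2 \<and> \<not> p dvd f1"
proof -
  note no_root = quadratic_perm_poly_no_root[OF assms(1,2,4,5)]
  have "p dvd f2"
  proof (rule ccontr)
    assume "\<not> p dvd f2"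
    then have "coprime f2 p"
      using prime_imp_coprime[OF assms(3)] by (simp add: coprime_commute)
    then obtain i where i: "[f2 * i = 1] (mod p)"
      using cong_solve_coprime_int by blast
    have "f2 * (- f1 * i) + f1 = f1 * (1 - f2 * i)"
      by (simp add: algebra_simps)
    moreover have "p dvd 1 - f2 * i"
      using i by (simp add: cong_iff_dvd_diff dvd_diff_commute)
    ultimately show False
      using no_root[of "- f1 * i"] by simp
  qed
  with no_root[of 0] show ?thesis
    by simp
qed

lemma comp_inv_perm_perm:
  assumes "perm_poly N f" "k \<in> {0..<N}"
  shows "comp_inv_perm N s f (f k mod N) = s k"
  using assms the_inv_into_f_f[of "\<lambda>k. f k mod N" "{0..<N}" k]
  unfolding perm_poly_def bij_betw_def comp_inv_perm_def by simp

definition perm_inv :: "int \<Rightarrow> (int \<Rightarrow> int) \<Rightarrow> int \<Rightarrow> int" where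
  "perm_inv N f k = the_inv_into {0..<N} (\<lambda>x. f x mod N) (k mod N)"

lemma respects_cong_perm_inv: "respects_cong N N (perm_inv N f)"
  unfolding respects_cong_def perm_inv_def cong_def by simp

lemma
  assumes "perm_poly N f" "N > 0"
  shows perm_inv_cong: "[f (perm_inv N f k) = k] (mod N)"
    and comp_inv_perm_eq: "k \<in> {0..<N} \<Longrightarrow> comp_inv_perm N s f k = s (perm_inv N f k mod N)"
proof -
  have bij: "bij_betw (\<lambda>x. f x mod N) {0..<N} {0..<N}"
    using assms(1) unfolding perm_poly_def .
  have "k mod N \<in> {0..<N}"
    using assms(2) by simp
  then have "perm_inv N f k \<in> {0..<N}" "f (perm_inv N f k) mod N = k mod N"
    unfolding perm_inv_def using bij_betw_apply[OF bij_betw_the_inv_into[OF bij]]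
      f_the_inv_into_f_bij_betw[OF bij] by auto
  then show "[f (perm_inv N f k) = k] (mod N)"
    and "k \<in> {0..<N} \<Longrightarrow> comp_inv_perm N s f k = s (perm_inv N f k mod N)"
    unfolding comp_inv_perm_def perm_inv_def cong_def by simp_all
qed

section \<open>Zadoff-Chu sequences\<close>

definition zc_phase :: "int \<Rightarrow> int \<Rightarrow> int \<Rightarrow> int \<Rightarrow> int" where
  "zc_phase N u l k = u * (k^2 + (N mod 2) * k + 2 * l * k)"

lemma zc_phase_eq: "zc_phase N u l x = u * x^2 + (u * (N mod 2 + 2 * l)) * x"
  unfolding zc_phase_def by (simp add: algebra_simps)

lemma zc_phase_respects_cong: "respects_cong N (2 * N) (zc_phase N u l)"
  unfolding respects_cong_def
proof (intro allI impI)
  fix x y assume "[x = y] (mod N)"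
  then obtain t where y: "y = x + N * t"
    by (auto simp: cong_iff_lin)
  have "even (N * t^2 + (N mod 2) * t)"
    by (cases "even N"; cases "even t") (auto simp: power2_eq_square odd_iff_mod_2_eq_one)
  then obtain e where e: "N * t^2 + (N mod 2) * t = 2 * e"
    by blast
  have "zc_phase N u l y = zc_phase N u l x + u * N * (2 * x * t + (N * t^2 + (N mod 2) * t) + 2 * l * t)"
    unfolding y zc_phase_def by (simp add: power2_eq_square algebra_simps)
  also have "\<dots> = zc_phase N u l x + 2 * N * (u * (x * t + e + l * t))"
    unfolding e by (simp add: algebra_simps)
  finally show "[zc_phase N u l x = zc_phase N u l y] (mod 2 * N)"
    by (simp add: cong_iff_lin)
qed

lemma is_ZCE:
  assumes "is_ZC N s" "N > 0"
  obtains u l where "coprime u N" "\<And>k. s (k mod N) = xi_half N (zc_phase N u l k)"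
proof -
  obtain u l where u: "coprime u N" and s: "\<forall>k\<in>{0..<N}. s k = zc_seq N u l k"
    using assms(1) unfolding is_ZC_def by blast
  have "s (k mod N) = xi_half N (zc_phase N u l k)" for k
  proof -
    have "s (k mod N) = xi_half N (zc_phase N u l (k mod N))"
      using s assms(2) unfolding zc_seq_def zc_phase_def by simp
    also have "\<dots> = xi_half N (zc_phase N u l k)"
      using assms(2) zc_phase_respects_cong by (rule xi_half_respects_cong) simp
    finally show ?thesis .
  qed
  with u that show thesis by blast
qed

lemma quadratic_phase_zc_comp_quadratic:
  assumes "prime p" "\<not> p dvd u" "p dvd f2" "\<not> p dvd f1"
  shows "quadratic_phase p (\<lambda>k. zc_phase N u l (f2 * k^2 + f1 * k + f0))"
proof -
  obtain g where g: "f2 = p * g"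
    using assms(3) by blast
  define w where "w = N mod 2 + 2 * l"
  define h where "h k = g * k^2 * (2 * u * (f1 * k + f0) + u * w)" for k
  have "respects_cong p p h"
    unfolding respects_cong_def h_def by (auto intro!: cong_add cong_mult cong_pow)
  then have "quadratic_phase p (\<lambda>k. u * (f1 * k + f0)^2 + (u * w) * (f1 * k + f0) + p * h k)"
    using assms by (intro quadratic_phase_affine_square)
  moreover have "[zc_phase N u l (f2 * k^2 + f1 * k + f0)
      = u * (f1 * k + f0)^2 + (u * w) * (f1 * k + f0) + p * h k] (mod p^2)" for k
  proof -
    have "[u * (f2 * k^2 + f1 * k + f0)^2 + (u * w) * (f2 * k^2 + f1 * k + f0)
        = u * (f1 * k + f0)^2 + (u * w) * (f1 * k + f0)
          + p * (g * k^2) * (2 * u * (f1 * k + f0) + u * w)] (mod p^2)"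
      by (rule quadratic_taylor_mod_sq) (simp add: g algebra_simps)
    then show ?thesis
      unfolding h_def zc_phase_eq w_def by (simp add: mult.assoc)
  qed
  ultimately show ?thesis
    by (blast intro: quadratic_phase_cong)
qed

lemma quadratic_phase_zc_comp_inverse:
  assumes "prime p" "\<not> p dvd u" "p dvd f2" "\<not> p dvd f1"
    and "\<And>k. [f2 * (\<sigma> k)^2 + f1 * \<sigma> k + f0 = k] (mod p^2)"
  shows "quadratic_phase p (\<lambda>k. zc_phase N u l (\<sigma> k))"
proof -
  obtain g where g: "f2 = p * g"
    using assms(3) by blast
  obtain fi where fi: "[f1 * fi = 1] (mod p^2)" "\<not> p dvd fi"
    using unit_inverse_mod_sq[OF assms(1,4)] by blast
  define w where "w = N mod 2 + 2 * l"
  define z where "z k = fi * (k - f0)" for k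
  define h where "h k = - fi * g * (z k)^2 * (2 * u * z k + u * w)" for k
  have "respects_cong p p h"
    unfolding respects_cong_def h_def z_def
    by (auto simp: cong_minus_minus_iff intro!: cong_add cong_diff cong_mult cong_pow)
  then have "quadratic_phase p (\<lambda>k. u * (fi * k + - fi * f0)^2 + (u * w) * (fi * k + - fi * f0) + p * h k)"
    using assms(1,2) fi(2) by (intro quadratic_phase_affine_square)
  moreover have "z = (\<lambda>k. fi * k + - fi * f0)"
    unfolding z_def by (auto simp: algebra_simps)
  ultimately have "quadratic_phase p (\<lambda>k. u * (z k)^2 + (u * w) * z k + p * h k)"
    by simp
  moreover have "[zc_phase N u l (\<sigma> k) = u * (z k)^2 + (u * w) * z k + p * h k] (mod p^2)" for k
  proof -
    have "[p * g * (\<sigma> k)^2 + f1 * \<sigma> k + f0 = k] (mod p^2)"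
      using assms(5)[of k] unfolding g by (simp add: ac_simps)
    from quadratic_inverse_mod_sq[OF fi(1) this]
    have "[\<sigma> k = z k + p * (- fi * g * (z k)^2)] (mod p^2)"
      unfolding z_def .
    then have "[u * (\<sigma> k)^2 + (u * w) * \<sigma> k = u * (z k)^2 + (u * w) * z k
          + p * (- fi * g * (z k)^2) * (2 * u * z k + u * w)] (mod p^2)"
      by (rule quadratic_taylor_mod_sq)
    then show ?thesis
      unfolding h_def zc_phase_eq w_def by (simp add: mult.assoc)
  qed
  ultimately show ?thesis
    by (blast intro: quadratic_phase_cong)
qed

lemma ZC_comp_has_quadratic_phase:
  assumes "is_ZC N s" "N > 0" "prime p" "p dvd N" "respects_cong N N \<sigma>"
    and "\<And>u l. \<not> p dvd u \<Longrightarrow> quadratic_phase p (\<lambda>k. zc_phase N u l (\<sigma> k))"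
    and "\<forall>k\<in>{0..<N}. y k = s (\<sigma> k mod N)"
  shows "has_quadratic_phase N p y"
proof -
  obtain u l where u: "coprime u N" and s: "\<And>k. s (k mod N) = xi_half N (zc_phase N u l k)"
    using is_ZCE[OF assms(1,2)] by blast
  have "quadratic_phase p (\<lambda>k. zc_phase N u l (\<sigma> k))"
    using assms(6) not_dvd_of_coprime[OF u assms(4,3)] .
  moreover have "respects_cong N (2 * N) (\<lambda>k. zc_phase N u l (\<sigma> k))"
    by (rule respects_cong_comp[OF zc_phase_respects_cong assms(5)])
  moreover have "\<forall>k\<in>{0..<N}. y k = 1 * xi_half N (zc_phase N u l (\<sigma> k))"
    using assms(7) s by simp
  ultimately show ?thesis
    unfolding has_quadratic_phase_def by blast
qed

lemma ZC_has_quadratic_phase: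
  assumes "is_ZC N t" "N > 0" "prime p" "p dvd N"
  shows "has_quadratic_phase N p t"
proof (rule ZC_comp_has_quadratic_phase[OF assms, where \<sigma> = "\<lambda>k. k"])
  show "respects_cong N N (\<lambda>k. k)"
    unfolding respects_cong_def by simp
  show "quadratic_phase p (\<lambda>k. zc_phase N u l k)" if "\<not> p dvd u" for u l
    using quadratic_phase_zc_comp_quadratic[OF assms(3) that, of 0 1 N l 0]
      prime_elem_not_unit[OF prime_imp_prime_elem[OF assms(3)]] by simp
qed simp

lemma ZC_comp_quad_perm_has_quadratic_phase:
  assumes "is_ZC N s" "quad_perm_poly N f2 f1 f0" "N > 0" "prime p" "p > 2" "p^2 dvd N"
  shows "has_quadratic_phase N p (comp_perm N s (\<lambda>x. f2 * x^2 + f1 * x + f0))"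
    and "has_quadratic_phase N p (comp_inv_perm N s (\<lambda>x. f2 * x^2 + f1 * x + f0))"
proof -
  have perm: "perm_poly N (\<lambda>x. f2 * x^2 + f1 * x + f0)"
    using assms(2) unfolding quad_perm_poly_def by blast
  have pN: "p dvd N"
    using assms(6) by (metis dvd_mult_left power2_eq_square)
  have f: "p dvd f2" "\<not> p dvd f1"
    using quadratic_perm_poly_coeffs[OF perm assms(3,4,5) pN] by auto
  show "has_quadratic_phase N p (comp_perm N s (\<lambda>x. f2 * x^2 + f1 * x + f0))"
    using quadratic_phase_zc_comp_quadratic[OF assms(4) _ f]
    by (intro ZC_comp_has_quadratic_phase[OF assms(1,3,4) pN, where \<sigma> = "\<lambda>x. f2 * x^2 + f1 * x + f0"])
       (auto simp: comp_perm_def respects_cong_def intro!: cong_add cong_mult cong_pow)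
  show "has_quadratic_phase N p (comp_inv_perm N s (\<lambda>x. f2 * x^2 + f1 * x + f0))"
    using quadratic_phase_zc_comp_inverse[OF assms(4) _ f cong_dvd_modulus[OF perm_inv_cong[OF perm assms(3)] assms(6)]]
    by (intro ZC_comp_has_quadratic_phase[OF assms(1,3,4) pN respects_cong_perm_inv])
       (auto simp: comp_inv_perm_eq[OF perm assms(3)])
qed

lemma ZC_comp_power_affine_no_quadratic_phase:
  fixes p :: nat
  assumes "prime p" "p > 2" "N > 0" "(int p)^2 dvd N" "is_ZC N s" "\<not> int p dvd 1 + a"
  shows "\<not> has_quadratic_phase N (int p) (comp_perm N s (\<lambda>x. x^p + a * x + b))"
proof
  define \<pi> where "\<pi> x = x^p + a * x + b" for x
  assume "has_quadratic_phase N (int p) (comp_perm N s (\<lambda>x. x^p + a * x + b))"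
  then obtain c G where G: "quadratic_phase (int p) G" "respects_cong N (2 * N) G"
      "\<forall>k\<in>{0..<N}. comp_perm N s \<pi> k = c * xi_half N (G k)"
    unfolding has_quadratic_phase_def \<pi>_def by blast
  obtain A B R where R: "p_flat (int p) R" and G_eq: "\<And>k. G k = A * k^2 + B * k + R k"
    using G(1) unfolding quadratic_phase_def by blast
  obtain u l where u: "coprime u N" and s: "\<And>k. s (k mod N) = xi_half N (zc_phase N u l k)"
    using is_ZCE[OF assms(5,3)] by blast
  have "\<not> int p dvd u"
    using not_dvd_of_coprime[OF u dvd_trans[OF _ assms(4)]] assms(1) by (simp add: power2_eq_square)
  define K where "K = zc_phase N u l (\<pi> 0) - G 0"
  have F: "respects_cong N (2 * N) (\<lambda>k. zc_phase N u l (\<pi> k))"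
    unfolding \<pi>_def by (rule respects_cong_comp[OF zc_phase_respects_cong respects_cong_power_affine])
  have "\<forall>k\<in>{0..<N}. xi_half N (zc_phase N u l (\<pi> k)) = c * xi_half N (G k)"
    using G(3) s unfolding comp_perm_def by simp
  moreover have "(int p)^2 dvd 2 * N"
    using assms(4) by simp
  ultimately have diff: "[zc_phase N u l (\<pi> k) - G k = K] (mod (int p)^2)" for k
    unfolding K_def by (rule xi_half_phase_difference[OF assms(3) F G(2)])
  have "u * (\<pi> k)^2 + (u * (N mod 2 + 2 * l)) * \<pi> k - (A * k^2 + B * k + (R k + K))
      = zc_phase N u l (\<pi> k) - G k - K" for k
    unfolding zc_phase_eq G_eq by (simp add: algebra_simps)
  then have "\<forall>k. [u * (\<pi> k)^2 + (u * (N mod 2 + 2 * l)) * \<pi> k = A * k^2 + B * k + (R k + K)]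
      (mod (int p)^2)"
    using diff by (simp only: cong_iff_dvd_diff simp_thms)
  moreover have "p_flat (int p) (\<lambda>k. R k + K)"
    using p_flat_transform[OF R, of "\<lambda>k. k" 1 K] unfolding respects_cong_def by simp
  ultimately show False
    using power_affine_phase_not_quadratic[OF assms(1,2) \<open>\<not> int p dvd u\<close> assms(6)]
    unfolding \<pi>_def by blast
qed

lemma ZC_comp_inv_power_affine_no_quadratic_phase:
  fixes p :: nat
  assumes "prime p" "p > 2" "N > 0" "(int p)^2 dvd N" "is_ZC N s" "\<not> int p dvd 1 + a"
    and "perm_poly N (\<lambda>x. x^p + a * x + b)"
  shows "\<not> has_quadratic_phase N (int p) (comp_inv_perm N s (\<lambda>x. x^p + a * x + b))"
proof
  define \<pi> where "\<pi> x = x^p + a * x + b" for x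
  assume "has_quadratic_phase N (int p) (comp_inv_perm N s (\<lambda>x. x^p + a * x + b))"
  then obtain c G where G: "quadratic_phase (int p) G" "respects_cong N (2 * N) G"
      "\<forall>k\<in>{0..<N}. comp_inv_perm N s \<pi> k = c * xi_half N (G k)"
    unfolding has_quadratic_phase_def \<pi>_def by blast
  obtain A B R where A: "\<not> int p dvd A" and R: "p_flat (int p) R"
    and G_eq: "\<And>k. G k = A * k^2 + B * k + R k"
    using G(1) unfolding quadratic_phase_def by blast
  obtain u l where s: "\<And>k. s (k mod N) = xi_half N (zc_phase N u l k)"
    using is_ZCE[OF assms(5,3)] by blast
  define K where "K = zc_phase N u l 0 - G (\<pi> 0)"
  have G\<pi>: "respects_cong N (2 * N) (\<lambda>k. G (\<pi> k))"
    unfolding \<pi>_def by (rule respects_cong_comp[OF G(2) respects_cong_power_affine])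
  have "\<forall>k\<in>{0..<N}. xi_half N (zc_phase N u l k) = c * xi_half N (G (\<pi> k))"
  proof
    fix k assume k: "k \<in> {0..<N}"
    have "xi_half N (zc_phase N u l k) = comp_inv_perm N s \<pi> (\<pi> k mod N)"
      using comp_inv_perm_perm[OF assms(7)[folded \<pi>_def] k] s[of k] k by simp
    also have "\<dots> = c * xi_half N (G (\<pi> k))"
      using G(3) xi_half_respects_cong[OF assms(3) G(2), of "\<pi> k mod N" "\<pi> k"] assms(3) by simp
    finally show "xi_half N (zc_phase N u l k) = c * xi_half N (G (\<pi> k))" .
  qed
  moreover have "(int p)^2 dvd 2 * N"
    using assms(4) by simp
  ultimately have diff: "[zc_phase N u l k - G (\<pi> k) = K] (mod (int p)^2)" for k
    unfolding K_def by (rule xi_half_phase_difference[OF assms(3) zc_phase_respects_cong G\<pi>])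
  have "A * (\<pi> k)^2 + B * \<pi> k - (u * k^2 + (u * (N mod 2 + 2 * l)) * k + (- 1 * R (\<pi> k) + - K))
      = - (zc_phase N u l k - G (\<pi> k) - K)" for k
    unfolding zc_phase_eq G_eq by (simp add: algebra_simps)
  then have "\<forall>k. [A * (\<pi> k)^2 + B * \<pi> k
      = u * k^2 + (u * (N mod 2 + 2 * l)) * k + (- 1 * R (\<pi> k) + - K)] (mod (int p)^2)"
    using diff by (simp only: cong_iff_dvd_diff dvd_minus_iff simp_thms)
  moreover have "p_flat (int p) (\<lambda>k. - 1 * R (\<pi> k) + - K)"
    unfolding \<pi>_def by (rule p_flat_transform[OF R respects_cong_power_affine])
  ultimately show False
    using power_affine_phase_not_quadratic[OF assms(1,2) A assms(6)] unfolding \<pi>_def by blast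
qed

theorem proposition4:
  fixes p n :: nat and Q :: "int set" and a b N u l :: int and s :: "int \<Rightarrow> complex"
  assumes "prime p" and "p \<ge> 3" and "n \<ge> 2"
    and "finite Q" and "\<forall>q\<in>Q. prime q \<and> q \<noteq> int p \<and> coprime (int p) (q - 1)"
    and "N = int p ^ n * (\<Prod>q\<in>Q. q)"
    and "is_ZC N s"
    and "perm_poly N (\<lambda>x. x ^ p + a * x + b)"
    and "a mod int p \<noteq> 0" and "a mod int p \<noteq> int p - 1"
  shows "(\<not> (\<exists>t. is_ZC N t \<and> equiv_seq N t (comp_perm N s (\<lambda>x. x ^ p + a * x + b))))
       \<and> (\<not> (\<exists>t. is_ZC N t \<and> equiv_seq N t (comp_inv_perm N s (\<lambda>x. x ^ p + a * x + b))))
       \<and> (\<not> (\<exists>s' f2 f1 f0. is_ZC N s' \<and> quad_perm_poly N f2 f1 f0 \<and>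
              (equiv_seq N (comp_perm N s' (\<lambda>x. f2 * x^2 + f1 * x + f0))
                           (comp_perm N s (\<lambda>x. x ^ p + a * x + b))
             \<or> equiv_seq N (comp_inv_perm N s' (\<lambda>x. f2 * x^2 + f1 * x + f0))
                           (comp_perm N s (\<lambda>x. x ^ p + a * x + b)))))"
proof -
  have p2: "p > 2" and prime_p: "prime (int p)"
    using assms(1,2) by simp_all
  have "(\<Prod>q\<in>Q. q) > 0"
    using assms(5) by (intro prod_pos) (auto dest: prime_gt_0_int)
  then have N0: "N > 0"
    using assms(6) p2 by simp
  have pN2: "(int p)^2 dvd N"
    using assms(3,6) by (simp add: le_imp_power_dvd)
  then have pN: "int p dvd N"
    by (simp add: power2_eq_square dvd_mult_left)
  have a1: "\<not> int p dvd 1 + a"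
    using assms(10) p2 by (simp add: dvd_1_plus_iff_mod)
  have "\<not> equiv_seq N y (comp_perm N s (\<lambda>x. x ^ p + a * x + b))"
    and "\<not> equiv_seq N y (comp_inv_perm N s (\<lambda>x. x ^ p + a * x + b))"
    if "has_quadratic_phase N (int p) y" for y
    using has_quadratic_phase_equiv_seq[OF _ that N0 prime_p pN]
      ZC_comp_power_affine_no_quadratic_phase[OF assms(1) p2 N0 pN2 assms(7) a1]
      ZC_comp_inv_power_affine_no_quadratic_phase[OF assms(1) p2 N0 pN2 assms(7) a1 assms(8)] by blast+
  moreover have "int p > 2"
    using p2 by simp
  ultimately show ?thesis
    using ZC_has_quadratic_phase[OF _ N0 prime_p pN]
      ZC_comp_quad_perm_has_quadratic_phase[OF _ _ N0 prime_p _ pN2] by blast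
qed

end
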